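(* For any simple graph $G$ on $n$ vertices, \[|E(G)|-|E(G^{(2)})|\le\left\lfloor\frac n2\right\rfloor.\] Furthermore, equality holds if and only if every connected component of $G$ is a complete bipartite graph $K_{a,b}$ with $|a-b|\le 1$ (an isolated vertex being regarded as $K_{0,1}$) and at most one component of $G$ has an odd number of vertices.
   Context: For a simple graph $G$, $G^{(2)}$ is the graph on $V(G)$ in which $\{u,v\}$ ($u\ne v$) is an edge iff there is $w\in V(G)$ with $\{u,w\},\{v,w\}\in E(G)$. *)

theory Defs
  imports Main
begin

definition simple_graph :: "'a set \<Rightarrow> 'a set set \<Rightarrow> bool" where
  "simple_graph V E \<longleftrightarrow> finite V \<and> (\<forall>e\<in>E. e \<subseteq> V \<and> card e = 2)"

definition square_edges :: "'a set \<Rightarrow> 'a set set \<Rightarrow> 'a set set" where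
  "square_edges V E = {{u, v} | u v. u \<in> V \<and> v \<in> V \<and> u \<noteq> v \<and>
                         (\<exists>w\<in>V. {u, w} \<in> E \<and> {v, w} \<in> E)}"

definition adj :: "'a set set \<Rightarrow> 'a \<Rightarrow> 'a \<Rightarrow> bool" where
  "adj E u v \<longleftrightarrow> {u, v} \<in> E"

definition component :: "'a set \<Rightarrow> 'a set set \<Rightarrow> 'a \<Rightarrow> 'a set" where
  "component V E v = {u \<in> V. (adj E)\<^sup>*\<^sup>* v u}"

definition components :: "'a set \<Rightarrow> 'a set set \<Rightarrow> 'a set set" where
  "components V E = component V E ` V"

definition balanced_complete_bipartite :: "'a set set \<Rightarrow> 'a set \<Rightarrow> bool" where
  "balanced_complete_bipartite E C \<longleftrightarrow>
     (\<exists>A B. A \<inter> B = {} \<and> A \<union> B = C \<and>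
        {e \<in> E. e \<subseteq> C} = {{x, y} | x y. x \<in> A \<and> y \<in> B} \<and>
        \<bar>int (card A) - int (card B)\<bar> \<le> 1)"

end

theory Submission
  imports Defs
begin

text \<open>
  Deleting both ends u, v of an edge removes deg u + deg v - 1 edges of G but at least
  deg2 u + deg u - 1 edges of G^(2), where deg2 u, the degree of u in G^(2), is at least deg v - 1.
  Induction on the number of vertices gives the bound, and equality forces N2(u) \<subseteq> N(v) along
  every edge uv. This makes every component a complete bipartite graph K_{a,b}, over which
  deg u - deg2 u sums to a + b - (a - b)^2. Hence 2 (|E(G)| - |E(G^(2))|) = n - \<Sigma> (a - b)^2,
  and equality holds iff this sum of squares is at most 1.
\<close>

definition neighbours :: "'a set set \<Rightarrow> 'a \<Rightarrow> 'a set" where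
  "neighbours E u = {w. {u, w} \<in> E}"

definition excess :: "'a set \<Rightarrow> 'a set set \<Rightarrow> int" where
  "excess V E = int (card E) - int (card (square_edges V E))"

definition complete_bipartite_parts :: "'a set set \<Rightarrow> 'a set \<Rightarrow> 'a set \<Rightarrow> 'a set \<Rightarrow> bool" where
  "complete_bipartite_parts E C A B \<longleftrightarrow>
     A \<inter> B = {} \<and> A \<union> B = C \<and> {e \<in> E. e \<subseteq> C} = {{x, y} | x y. x \<in> A \<and> y \<in> B}"

lemma simple_graph_edgeD:
  assumes "simple_graph V E" "{u, v} \<in> E"
  shows "u \<noteq> v" "u \<in> V" "v \<in> V"
proof -
  have "card {u, v} = 2" "{u, v} \<subseteq> V" using assms unfolding simple_graph_def by auto
  then show "u \<noteq> v" "u \<in> V" "v \<in> V" by (auto split: if_splits)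
qed

lemma simple_graph_edgeE:
  assumes "simple_graph V E" "e \<in> E"
  obtains u v where "e = {u, v}" "u \<noteq> v"
  using assms card_2_iff unfolding simple_graph_def by metis

lemma simple_graph_finite_edges: "simple_graph V E \<Longrightarrow> finite E"
  unfolding simple_graph_def by (meson Pow_iff finite_Pow_iff finite_subset subsetI)

lemma simple_graph_induced: "simple_graph V E \<Longrightarrow> W \<subseteq> V \<Longrightarrow> simple_graph W {e \<in> E. e \<subseteq> W}"
  unfolding simple_graph_def by (auto intro: finite_subset)

lemma simple_graph_square_edges: "simple_graph V E \<Longrightarrow> simple_graph V (square_edges V E)"
  unfolding simple_graph_def square_edges_def by auto

lemma mem_neighbours_iff: "w \<in> neighbours E u \<longleftrightarrow> {u, w} \<in> E"
  unfolding neighbours_def by simp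

lemma neighbours_subset: "simple_graph V E \<Longrightarrow> neighbours E u \<subseteq> V"
  unfolding neighbours_def by (auto dest: simple_graph_edgeD(3))

lemma finite_neighbours: "simple_graph V E \<Longrightarrow> finite (neighbours E u)"
  using neighbours_subset finite_subset unfolding simple_graph_def by metis

lemma mem_square_neighbours_iff:
  assumes "simple_graph V E"
  shows "x \<in> neighbours (square_edges V E) u \<longleftrightarrow> x \<noteq> u \<and> (\<exists>w. {u, w} \<in> E \<and> {x, w} \<in> E)"
proof -
  have "{u, x} \<in> square_edges V E \<longleftrightarrow>
      u \<in> V \<and> x \<in> V \<and> u \<noteq> x \<and> (\<exists>w\<in>V. {u, w} \<in> E \<and> {x, w} \<in> E)"
    unfolding square_edges_def by (auto simp: doubleton_eq_iff)
  then show ?thesis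
    unfolding neighbours_def using simple_graph_edgeD[OF assms] by blast
qed

lemma card_neighbours_eq_card_incident:
  assumes "simple_graph V E"
  shows "card (neighbours E u) = card {e \<in> E. u \<in> e}"
proof -
  have "bij_betw (\<lambda>w. {u, w}) (neighbours E u) {e \<in> E. u \<in> e}"
  proof (rule bij_betw_imageI)
    show "inj_on (\<lambda>w. {u, w}) (neighbours E u)"
      by (auto simp: inj_on_def doubleton_eq_iff)
    show "(\<lambda>w. {u, w}) ` neighbours E u = {e \<in> E. u \<in> e}"
    proof (intro equalityI subsetI)
      fix e assume "e \<in> {e \<in> E. u \<in> e}"
      then obtain x y where "e \<in> E" "u \<in> e" "e = {x, y}"
        using simple_graph_edgeE[OF assms] by blast
      then have "e = {u, if u = x then y else x}" "e \<in> E" by auto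
      then show "e \<in> (\<lambda>w. {u, w}) ` neighbours E u"
        unfolding neighbours_def by blast
    qed (auto simp: neighbours_def)
  qed
  then show ?thesis by (rule bij_betw_same_card)
qed

lemma handshake:
  assumes "simple_graph V E"
  shows "2 * card E = (\<Sum>u\<in>V. card (neighbours E u))"
proof -
  have fin: "finite V" "finite E" and E2: "\<And>e. e \<in> E \<Longrightarrow> e \<subseteq> V \<and> card e = 2"
    using assms simple_graph_finite_edges unfolding simple_graph_def by auto
  have "(\<Sum>u\<in>V. card (neighbours E u)) = (\<Sum>u\<in>V. \<Sum>e\<in>E. if u \<in> e then 1 else 0)"
    using fin by (simp add: card_neighbours_eq_card_incident[OF assms] sum.inter_filter[of E "\<lambda>_. 1", symmetric])
  also have "\<dots> = (\<Sum>e\<in>E. \<Sum>u\<in>V. if u \<in> e then 1 else 0)"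
    by (rule sum.swap)
  also have "\<dots> = (\<Sum>e\<in>E. card e)"
  proof (rule sum.cong[OF refl])
    fix e assume "e \<in> E"
    then have "{u \<in> V. u \<in> e} = e" using E2 by auto
    then show "(\<Sum>u\<in>V. if u \<in> e then 1 else 0) = card e"
      using fin by (simp add: sum.inter_filter[of V "\<lambda>_. 1", symmetric])
  qed
  also have "\<dots> = 2 * card E"
    using E2 by simp
  finally show ?thesis ..
qed

lemma double_excess_eq_sum:
  assumes "simple_graph V E"
  shows "2 * excess V E =
    (\<Sum>u\<in>V. int (card (neighbours E u)) - int (card (neighbours (square_edges V E) u)))"
  using arg_cong[OF handshake[OF assms], of int] arg_cong[OF handshake[OF simple_graph_square_edges[OF assms]], of int]
  unfolding excess_def by (simp add: sum_subtractf)

lemma card_edges_delete_edge: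
  assumes G: "simple_graph V E" and uv: "{u, v} \<in> E"
  shows "card E + 1 =
    card {e \<in> E. e \<subseteq> V - {u, v}} + card (neighbours E u) + card (neighbours E v)"
proof -
  define E' where "E' = {e \<in> E. e \<subseteq> V - {u, v}}"
  define Eu where "Eu = {e \<in> E. u \<in> e}"
  define Ev where "Ev = {e \<in> E. v \<in> e}"
  have fin: "finite E'" "finite Eu" "finite Ev"
    using simple_graph_finite_edges[OF G] unfolding E'_def Eu_def Ev_def by auto
  have "E = E' \<union> (Eu \<union> Ev)" "E' \<inter> (Eu \<union> Ev) = {}"
    using G unfolding simple_graph_def E'_def Eu_def Ev_def by auto
  then have "card E = card E' + card (Eu \<union> Ev)"
    using fin by (metis card_Un_disjoint finite_UnI)
  moreover have "Eu \<inter> Ev = {{u, v}}"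
  proof
    show "Eu \<inter> Ev \<subseteq> {{u, v}}"
    proof
      fix e assume e: "e \<in> Eu \<inter> Ev"
      then obtain x y where "e = {x, y}"
        unfolding Eu_def by (auto elim: simple_graph_edgeE[OF G])
      then show "e \<in> {{u, v}}"
        using e simple_graph_edgeD(1)[OF G uv] unfolding Eu_def Ev_def by auto
    qed
  qed (use uv in \<open>auto simp: Eu_def Ev_def\<close>)
  then have "card (Eu \<union> Ev) + 1 = card Eu + card Ev"
    using card_Un_Int[OF fin(2,3)] by simp
  ultimately show ?thesis
    unfolding E'_def Eu_def Ev_def card_neighbours_eq_card_incident[OF G] by simp
qed

text \<open>Besides the square edges of G - u - v, the square edges at u and the edges {v, y} for the
  neighbours y \<noteq> v of u (common neighbour u) are pairwise distinct square edges of G.\<close>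

lemma card_square_edges_delete_edge:
  assumes G: "simple_graph V E" and uv: "{u, v} \<in> E"
  defines "S \<equiv> square_edges V E"
  shows "card (square_edges (V - {u, v}) {e \<in> E. e \<subseteq> V - {u, v}})
      + card (neighbours S u) + card (neighbours E u) \<le> card S + 1"
proof -
  define S' where "S' = square_edges (V - {u, v}) {e \<in> E. e \<subseteq> V - {u, v}}"
  define Su where "Su = {e \<in> S. u \<in> e}"
  define Sv where "Sv = (\<lambda>y. {v, y}) ` (neighbours E u - {v})"
  have u_ne_v: "u \<noteq> v" using simple_graph_edgeD[OF G uv] by simp
  have fin: "finite S" using simple_graph_finite_edges[OF simple_graph_square_edges[OF G]] by (simp add: S_def)
  have "S' \<subseteq> S"
    unfolding S'_def S_def square_edges_def by blast
  moreover have "Su \<subseteq> S" unfolding Su_def by blast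
  moreover have "Sv \<subseteq> S"
  proof
    fix e assume "e \<in> Sv"
    then obtain y where y: "e = {v, y}" "{u, y} \<in> E" "y \<noteq> v"
      unfolding Sv_def neighbours_def by auto
    have "{v, u} \<in> E" "{y, u} \<in> E" using uv y(2) by (auto simp: insert_commute)
    then have "y \<in> neighbours S v"
      using y(3) mem_square_neighbours_iff[OF G] unfolding S_def by blast
    then show "e \<in> S" unfolding y(1) by (simp add: mem_neighbours_iff)
  qed
  ultimately have "card (S' \<union> Su \<union> Sv) \<le> card S"
    using fin by (intro card_mono) auto
  moreover have "S' \<inter> Su = {}" "(S' \<union> Su) \<inter> Sv = {}"
  proof -
    have "u \<notin> e \<and> v \<notin> e" if "e \<in> S'" for e
      using that unfolding S'_def square_edges_def by auto
    moreover have "v \<in> e \<and> u \<notin> e" if "e \<in> Sv" for e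
    proof -
      obtain y where "e = {v, y}" "y \<in> neighbours E u"
        using \<open>e \<in> Sv\<close> unfolding Sv_def by blast
      then have "e = {v, y}" "{u, y} \<in> E" by (simp_all add: mem_neighbours_iff)
      then show ?thesis using u_ne_v simple_graph_edgeD(1)[OF G] by blast
    qed
    ultimately show "S' \<inter> Su = {}" "(S' \<union> Su) \<inter> Sv = {}"
      unfolding Su_def by blast+
  qed
  moreover have "finite S'" "finite Su" "finite Sv"
    using \<open>S' \<subseteq> S\<close> \<open>Su \<subseteq> S\<close> \<open>Sv \<subseteq> S\<close> fin finite_subset by blast+
  ultimately have "card S' + card Su + card Sv \<le> card S"
    by (simp add: card_Un_disjoint)
  moreover have "card Su = card (neighbours S u)"
    unfolding Su_def S_def card_neighbours_eq_card_incident[OF simple_graph_square_edges[OF G]] ..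
  moreover have "card Sv + 1 = card (neighbours E u)"
  proof -
    have "card Sv = card (neighbours E u - {v})"
      unfolding Sv_def by (rule card_image) (auto simp: inj_on_def doubleton_eq_iff)
    moreover have "v \<in> neighbours E u" using uv by (simp add: mem_neighbours_iff)
    ultimately show ?thesis
      using card_Suc_Diff1[OF finite_neighbours[OF G]] by simp
  qed
  ultimately show ?thesis unfolding S'_def by linarith
qed

lemma neighbours_diff_subset_square_neighbours:
  assumes G: "simple_graph V E" and uv: "{u, v} \<in> E"
  shows "neighbours E v - {u} \<subseteq> neighbours (square_edges V E) u"
proof
  fix x assume "x \<in> neighbours E v - {u}"
  then have "{x, v} \<in> E" "x \<noteq> u" by (auto simp: mem_neighbours_iff insert_commute)
  then show "x \<in> neighbours (square_edges V E) u"
    using uv unfolding mem_square_neighbours_iff[OF G] by blast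
qed

lemma excess_delete_edge:
  assumes G: "simple_graph V E" and uv: "{u, v} \<in> E"
  shows "excess V E \<le> excess (V - {u, v}) {e \<in> E. e \<subseteq> V - {u, v}}
    + int (card (neighbours E v)) - int (card (neighbours (square_edges V E) u))"
  using card_edges_delete_edge[OF G uv] card_square_edges_delete_edge[OF G uv]
  unfolding excess_def by linarith

lemma card_neighbours_le_square_neighbours:
  assumes G: "simple_graph V E" and uv: "{u, v} \<in> E"
  shows "card (neighbours E v) \<le> card (neighbours (square_edges V E) u) + 1"
proof -
  have "card (neighbours E v - {u}) \<le> card (neighbours (square_edges V E) u)"
    using neighbours_diff_subset_square_neighbours[OF G uv]
    by (rule card_mono[OF finite_neighbours[OF simple_graph_square_edges[OF G]]])
  moreover have "u \<in> neighbours E v" using uv by (simp add: mem_neighbours_iff insert_commute)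
  ultimately show ?thesis using card_Suc_Diff1[OF finite_neighbours[OF G]] by fastforce
qed

lemma card_Diff_edge:
  assumes G: "simple_graph V E" and uv: "{u, v} \<in> E"
  shows "card (V - {u, v}) + 2 = card V"
proof -
  have "card {u, v} = 2" "{u, v} \<subseteq> V" "finite V"
    using G uv unfolding simple_graph_def by auto
  then show ?thesis using card_mono[of V "{u, v}"] by (simp add: card_Diff_subset)
qed

lemma excess_le_half: "simple_graph V E \<Longrightarrow> excess V E \<le> int (card V div 2)"
proof (induction "card V" arbitrary: V E rule: less_induct)
  case less
  show ?case
  proof (cases "E = {}")
    case True
    then show ?thesis by (simp add: excess_def)
  next
    case False
    then obtain u v where uv: "{u, v} \<in> E"
      using simple_graph_edgeE[OF less.prems] by blast
    have card_V: "card (V - {u, v}) + 2 = card V"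
      by (rule card_Diff_edge[OF less.prems uv])
    then have "excess (V - {u, v}) {e \<in> E. e \<subseteq> V - {u, v}} \<le> int (card (V - {u, v}) div 2)"
      using less.hyps simple_graph_induced[OF less.prems] by simp
    then show ?thesis
      using excess_delete_edge[OF less.prems uv] card_neighbours_le_square_neighbours[OF less.prems uv] card_V
      by linarith
  qed
qed

lemma square_neighbours_subset_if_excess_eq_half:
  assumes G: "simple_graph V E" and eq: "excess V E = int (card V div 2)" and uv: "{u, v} \<in> E"
  shows "neighbours (square_edges V E) u \<subseteq> neighbours E v"
proof -
  let ?N2 = "neighbours (square_edges V E) u"
  have "card (V - {u, v}) + 2 = card V" by (rule card_Diff_edge[OF G uv])
  moreover have "excess (V - {u, v}) {e \<in> E. e \<subseteq> V - {u, v}} \<le> int (card (V - {u, v}) div 2)"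
    using excess_le_half simple_graph_induced[OF G] by blast
  moreover have "u \<in> neighbours E v" using uv by (simp add: mem_neighbours_iff insert_commute)
  ultimately have "card ?N2 \<le> card (neighbours E v - {u})"
    using excess_delete_edge[OF G uv] eq finite_neighbours[OF G, of v] by (simp add: card_Diff_singleton)
  then have "neighbours E v - {u} = ?N2"
    using neighbours_diff_subset_square_neighbours[OF G uv]
    by (intro card_seteq finite_neighbours[OF simple_graph_square_edges[OF G]])
  then show ?thesis by blast
qed

lemma adj_rtranclp_sym: "(adj E)\<^sup>*\<^sup>* u v \<Longrightarrow> (adj E)\<^sup>*\<^sup>* v u"
proof -
  have "symp (adj E)" by (rule sympI) (simp add: adj_def insert_commute)
  then show "(adj E)\<^sup>*\<^sup>* u v \<Longrightarrow> (adj E)\<^sup>*\<^sup>* v u" by (rule sympD[OF symp_rtranclp])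
qed

lemma component_subset: "component V E r \<subseteq> V"
  unfolding component_def by blast

lemma component_eq:
  assumes "u \<in> component V E r"
  shows "component V E u = component V E r"
proof -
  have "(adj E)\<^sup>*\<^sup>* r u" using assms by (simp add: component_def)
  then have "(adj E)\<^sup>*\<^sup>* u x \<longleftrightarrow> (adj E)\<^sup>*\<^sup>* r x" for x
    using adj_rtranclp_sym rtranclp_trans by metis
  then show ?thesis unfolding component_def by simp
qed

lemma components_eq_component:
  assumes "C \<in> components V E" "u \<in> C"
  shows "C = component V E u"
proof -
  obtain r where "C = component V E r" using assms(1) unfolding components_def by blast
  then show ?thesis using component_eq assms(2) by metis
qed

lemma Union_components: "\<Union>(components V E) = V"
proof (intro equalityI subsetI)
  fix x assume "x \<in> \<Union>(components V E)"
  then obtain r where "x \<in> component V E r" unfolding components_def by blast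
  then show "x \<in> V" using component_subset[of V E r] by blast
next
  fix x assume "x \<in> V"
  then have "x \<in> component V E x" by (simp add: component_def)
  moreover have "component V E x \<in> components V E" using \<open>x \<in> V\<close> by (simp add: components_def)
  ultimately show "x \<in> \<Union>(components V E)" by blast
qed

lemma finite_components: "finite V \<Longrightarrow> C \<in> components V E \<Longrightarrow> finite C"
  unfolding components_def by (auto intro: finite_subset[OF component_subset])

lemma neighbours_subset_component:
  assumes G: "simple_graph V E" and u: "u \<in> component V E r"
  shows "neighbours E u \<subseteq> component V E r"
proof
  fix w assume "w \<in> neighbours E u"
  then have "{u, w} \<in> E" by (simp add: mem_neighbours_iff)
  then have "adj E u w" "w \<in> V" using simple_graph_edgeD(3)[OF G] by (simp_all add: adj_def)
  with u show "w \<in> component V E r"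
    unfolding component_def by (auto intro: rtranclp.rtrancl_into_rtrancl)
qed

lemma sum_components:
  assumes "finite V"
  shows "(\<Sum>u\<in>V. f u) = (\<Sum>C\<in>components V E. \<Sum>u\<in>C. f u)"
proof -
  have disjoint: "C \<inter> C' = {}" if "C \<in> components V E" "C' \<in> components V E" "C \<noteq> C'" for C C'
  proof (rule ccontr)
    assume "C \<inter> C' \<noteq> {}"
    then obtain x where "x \<in> C" "x \<in> C'" by blast
    have "C = component V E x" by (rule components_eq_component[OF that(1) \<open>x \<in> C\<close>])
    moreover have "C' = component V E x" by (rule components_eq_component[OF that(2) \<open>x \<in> C'\<close>])
    ultimately show False using that(3) by simp
  qed
  have "sum f (\<Union>(components V E)) = (sum \<circ> sum) f (components V E)"
    using finite_components[OF assms] disjoint by (intro sum.Union_disjoint) auto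
  then show ?thesis by (simp add: Union_components)
qed

lemma component_eq_closed_set:
  assumes "S \<subseteq> V" "r \<in> S" "\<And>x. x \<in> S \<Longrightarrow> neighbours E x \<subseteq> S" "\<And>x. x \<in> S \<Longrightarrow> (adj E)\<^sup>*\<^sup>* r x"
  shows "component V E r = S"
proof -
  have "x \<in> S" if "(adj E)\<^sup>*\<^sup>* r x" for x
    using that
  proof (induction rule: rtranclp_induct)
    case (step y z)
    then have "z \<in> neighbours E y" by (simp add: adj_def mem_neighbours_iff)
    with step.IH assms(3) show ?case by blast
  qed (rule assms(2))
  then show ?thesis using assms(1,4) unfolding component_def by blast
qed

lemma complete_bipartite_parts_swap:
  "complete_bipartite_parts E C A B \<Longrightarrow> complete_bipartite_parts E C B A"
  unfolding complete_bipartite_parts_def by (auto simp: insert_commute)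

lemma complete_bipartite_parts_if_neighbours:
  assumes G: "simple_graph V E" and "A \<inter> B = {}"
    and NA: "\<And>x. x \<in> A \<Longrightarrow> neighbours E x = B" and NB: "\<And>y. y \<in> B \<Longrightarrow> neighbours E y = A"
  shows "complete_bipartite_parts E (A \<union> B) A B"
proof -
  have "{e \<in> E. e \<subseteq> A \<union> B} = {{x, y} | x y. x \<in> A \<and> y \<in> B}"
  proof (intro equalityI subsetI)
    fix e assume "e \<in> {e \<in> E. e \<subseteq> A \<union> B}"
    moreover obtain x y where "e = {x, y}"
      using calculation simple_graph_edgeE[OF G] by blast
    ultimately have "{x, y} \<in> E" "x \<in> A \<union> B" "y \<in> neighbours E x" "e = {y, x}"
      by (auto simp: mem_neighbours_iff insert_commute)
    then have "x \<in> A \<and> y \<in> B \<or> y \<in> A \<and> x \<in> B" using NA NB by blast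
    then show "e \<in> {{x, y} | x y. x \<in> A \<and> y \<in> B}"
      using \<open>e = {x, y}\<close> \<open>e = {y, x}\<close> by blast
  next
    fix e assume "e \<in> {{x, y} | x y. x \<in> A \<and> y \<in> B}"
    then obtain x y where "e = {x, y}" "x \<in> A" "y \<in> B" by blast
    moreover from this have "y \<in> neighbours E x" using NA by blast
    ultimately show "e \<in> {e \<in> E. e \<subseteq> A \<union> B}" by (simp add: mem_neighbours_iff)
  qed
  then show ?thesis
    unfolding complete_bipartite_parts_def using assms(2) by blast
qed

text \<open>Under the equality condition, vertices with a common neighbour have the same neighbourhood,
  so the component of r is N(v) \<union> N(r) for any neighbour v of r.\<close>

context
  fixes V :: "'a set" and E :: "'a set set"
  assumes G: "simple_graph V E"
    and square_neighbours_subset: "\<And>u v. {u, v} \<in> E \<Longrightarrow> neighbours (square_edges V E) u \<subseteq> neighbours E v"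
begin

lemma neighbours_eq_if_common_neighbour:
  assumes "{a, w} \<in> E" "{b, w} \<in> E"
  shows "neighbours E a = neighbours E b"
proof -
  have "neighbours E x \<subseteq> neighbours E y" if xw: "{x, w} \<in> E" and yw: "{y, w} \<in> E" for x y
  proof
    fix z assume xz: "z \<in> neighbours E x"
    show "z \<in> neighbours E y"
    proof (cases "z = w")
      case True
      then show ?thesis using yw by (simp add: mem_neighbours_iff insert_commute)
    next
      case False
      have "{w, x} \<in> E" "{z, x} \<in> E"
        using xw xz by (simp_all add: mem_neighbours_iff insert_commute)
      then have "z \<in> neighbours (square_edges V E) w"
        using False unfolding mem_square_neighbours_iff[OF G] by blast
      moreover have "{w, y} \<in> E" using yw by (simp add: insert_commute)
      ultimately show ?thesis using square_neighbours_subset by blast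
    qed
  qed
  then show ?thesis using assms by blast
qed

lemma component_complete_bipartite:
  assumes r: "r \<in> V"
  shows "\<exists>A B. complete_bipartite_parts E (component V E r) A B"
proof (cases "neighbours E r = {}")
  case True
  have "component V E r = {r}"
    using r True by (intro component_eq_closed_set) auto
  moreover have "complete_bipartite_parts E ({} \<union> {r}) {} {r}"
    using True by (intro complete_bipartite_parts_if_neighbours[OF G]) auto
  ultimately show ?thesis by auto
next
  case False
  then obtain v where rv: "{r, v} \<in> E" by (auto simp: mem_neighbours_iff)
  then have vr: "{v, r} \<in> E" by (simp add: insert_commute)
  define A where "A = neighbours E v"
  define B where "B = neighbours E r"
  have NA: "neighbours E x = B" if "x \<in> A" for x
    using that neighbours_eq_if_common_neighbour[OF _ rv] unfolding A_def B_def
    by (simp add: mem_neighbours_iff insert_commute)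
  have NB: "neighbours E y = A" if "y \<in> B" for y
    using that neighbours_eq_if_common_neighbour[OF _ vr] unfolding A_def B_def
    by (simp add: mem_neighbours_iff insert_commute)
  have "x \<notin> neighbours E x" for x
    using simple_graph_edgeD(1)[OF G, of x x] by (auto simp: mem_neighbours_iff)
  then have "A \<inter> B = {}" using NA by blast
  then have parts: "complete_bipartite_parts E (A \<union> B) A B"
    using NA NB by (rule complete_bipartite_parts_if_neighbours[OF G])
  have reach_B: "(adj E)\<^sup>*\<^sup>* r y" if "y \<in> B" for y
    using that unfolding B_def by (auto simp: mem_neighbours_iff adj_def intro: r_into_rtranclp)
  have reach_A: "(adj E)\<^sup>*\<^sup>* r x" if "x \<in> A" for x
  proof -
    have "adj E r v" "adj E v x" using rv that unfolding A_def by (simp_all add: adj_def mem_neighbours_iff)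
    then show ?thesis by (meson r_into_rtranclp rtranclp.rtrancl_into_rtrancl)
  qed
  have "component V E r = A \<union> B"
  proof (rule component_eq_closed_set)
    show "A \<union> B \<subseteq> V" using neighbours_subset[OF G] unfolding A_def B_def by blast
    show "r \<in> A \<union> B" using vr unfolding A_def by (simp add: mem_neighbours_iff)
    show "neighbours E x \<subseteq> A \<union> B" if "x \<in> A \<union> B" for x
      using that NA NB by blast
    show "(adj E)\<^sup>*\<^sup>* r x" if "x \<in> A \<union> B" for x
      using that reach_A reach_B by blast
  qed
  then show ?thesis using parts by auto
qed

end

lemma neighbours_complete_bipartite_component:
  assumes G: "simple_graph V E" and C: "C \<in> components V E"
    and parts: "complete_bipartite_parts E C A B" and u: "u \<in> A"
  shows "neighbours E u = B"
proof
  have AB: "A \<inter> B = {}" "A \<union> B = C" "{e \<in> E. e \<subseteq> C} = {{x, y} | x y. x \<in> A \<and> y \<in> B}"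
    using parts unfolding complete_bipartite_parts_def by auto
  have "u \<in> C" using AB(2) u by blast
  then have "C = component V E u" by (rule components_eq_component[OF C])
  then have sub: "neighbours E u \<subseteq> C"
    using neighbours_subset_component[OF G] \<open>u \<in> C\<close> by blast
  show "neighbours E u \<subseteq> B"
  proof
    fix w assume w: "w \<in> neighbours E u"
    have "w \<in> C" using w sub by blast
    then have "{u, w} \<in> {e \<in> E. e \<subseteq> C}"
      using \<open>u \<in> C\<close> w by (simp add: mem_neighbours_iff)
    then obtain x y where xy: "{u, w} = {x, y}" "x \<in> A" "y \<in> B"
      unfolding AB(3) by blast
    then have "u = x \<and> w = y \<or> u = y \<and> w = x" by (simp add: doubleton_eq_iff)
    then show "w \<in> B" using xy(2,3) u AB(1) by blast
  qed
  show "B \<subseteq> neighbours E u"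
  proof
    fix w assume "w \<in> B"
    then have "{u, w} \<in> {e \<in> E. e \<subseteq> C}" unfolding AB(3) using u by blast
    then show "w \<in> neighbours E u" by (simp add: mem_neighbours_iff)
  qed
qed

lemma square_neighbours_complete_bipartite_component:
  assumes G: "simple_graph V E" and C: "C \<in> components V E"
    and parts: "complete_bipartite_parts E C A B" and u: "u \<in> A"
  shows "neighbours (square_edges V E) u = A - {u}"
proof (intro equalityI subsetI)
  have NA: "neighbours E x = B" if "x \<in> A" for x
    using neighbours_complete_bipartite_component[OF G C parts that] .
  have NB: "neighbours E y = A" if "y \<in> B" for y
    using neighbours_complete_bipartite_component[OF G C complete_bipartite_parts_swap[OF parts] that] .
  {
    fix x assume "x \<in> neighbours (square_edges V E) u"
    then obtain w where "x \<noteq> u" "w \<in> neighbours E u" "x \<in> neighbours E w"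
      unfolding mem_square_neighbours_iff[OF G] by (auto simp: mem_neighbours_iff insert_commute)
    then show "x \<in> A - {u}" using NA[OF u] NB by blast
  next
    fix x assume x: "x \<in> A - {u}"
    have "u \<in> C" "x \<in> C" using parts u x unfolding complete_bipartite_parts_def by auto
    then have "(adj E)\<^sup>*\<^sup>* u x"
      using components_eq_component[OF C \<open>u \<in> C\<close>] unfolding component_def by blast
    then obtain w where "adj E u w" using x by (metis DiffD2 converse_rtranclpE singletonI)
    then have uw: "w \<in> neighbours E u" by (simp add: adj_def mem_neighbours_iff)
    then have "x \<in> neighbours E w" using NA[OF u] NB x by blast
    then have "{u, w} \<in> E" "{x, w} \<in> E"
      using uw by (simp_all add: mem_neighbours_iff insert_commute)
    then show "x \<in> neighbours (square_edges V E) u"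
      using x unfolding mem_square_neighbours_iff[OF G] by blast
  }
qed

lemma degree_diff_complete_bipartite_component:
  assumes G: "simple_graph V E" and C: "C \<in> components V E"
    and parts: "complete_bipartite_parts E C A B" and u: "u \<in> A"
  shows "int (card (neighbours E u)) - int (card (neighbours (square_edges V E) u))
    = int (card B) - int (card A) + 1"
proof -
  have "finite A"
    using parts finite_components[OF _ C] G unfolding complete_bipartite_parts_def simple_graph_def by auto
  then have "card A > 0" using u by (auto simp: card_gt_0_iff)
  then show ?thesis
    using u neighbours_complete_bipartite_component[OF G C parts u]
      square_neighbours_complete_bipartite_component[OF G C parts u]
    by (simp add: of_nat_diff)
qed

lemma sum_degree_diff_complete_bipartite_component:
  assumes G: "simple_graph V E" and C: "C \<in> components V E"
    and parts: "complete_bipartite_parts E C A B"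
  shows "(\<Sum>u\<in>C. int (card (neighbours E u)) - int (card (neighbours (square_edges V E) u)))
    = int (card C) - (int (card A) - int (card B))^2"
proof -
  let ?f = "\<lambda>u. int (card (neighbours E u)) - int (card (neighbours (square_edges V E) u))"
  have AB: "A \<inter> B = {}" "A \<union> B = C" using parts unfolding complete_bipartite_parts_def by auto
  have fin: "finite A" "finite B"
    using AB finite_components[OF _ C] G unfolding simple_graph_def by auto
  have "(\<Sum>u\<in>C. ?f u) = (\<Sum>u\<in>A. ?f u) + (\<Sum>u\<in>B. ?f u)"
    using sum.union_disjoint[OF fin AB(1)] AB(2) by simp
  also have "\<dots> =
      int (card A) * (int (card B) - int (card A) + 1) + int (card B) * (int (card A) - int (card B) + 1)"
    using degree_diff_complete_bipartite_component[OF G C parts]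
      degree_diff_complete_bipartite_component[OF G C complete_bipartite_parts_swap[OF parts]]
    by simp
  also have "\<dots> = (int (card A) + int (card B)) - (int (card A) - int (card B))^2"
    by (simp add: power2_eq_square algebra_simps)
  also have "int (card A) + int (card B) = int (card C)"
    using card_Un_disjoint[OF fin AB(1)] AB(2) by simp
  finally show ?thesis .
qed

lemma double_excess_complete_bipartite:
  assumes G: "simple_graph V E"
    and parts: "\<And>C. C \<in> components V E \<Longrightarrow> complete_bipartite_parts E C (A C) (B C)"
  shows "2 * excess V E =
    int (card V) - (\<Sum>C\<in>components V E. (int (card (A C)) - int (card (B C)))^2)"
proof -
  have fin: "finite V" using G by (simp add: simple_graph_def)
  have "2 * excess V E = (\<Sum>C\<in>components V E. \<Sum>u\<in>C.
      int (card (neighbours E u)) - int (card (neighbours (square_edges V E) u)))"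
    unfolding double_excess_eq_sum[OF G] by (rule sum_components[OF fin])
  also have "\<dots> = (\<Sum>C\<in>components V E. int (card C) - (int (card (A C)) - int (card (B C)))^2)"
    using sum_degree_diff_complete_bipartite_component[OF G _ parts] by simp
  also have "\<dots> = (\<Sum>C\<in>components V E. int (card C))
      - (\<Sum>C\<in>components V E. (int (card (A C)) - int (card (B C)))^2)"
    by (rule sum_subtractf)
  also have "(\<Sum>C\<in>components V E. int (card C)) = int (card V)"
    using sum_components[OF fin, of "\<lambda>_. 1 :: int" E] by simp
  finally show ?thesis .
qed

lemma one_le_square_if_odd_int: "odd (x :: int) \<Longrightarrow> 1 \<le> x^2"
  by (cases "x = 0") (simp_all add: power2_ge_1_iff, presburger)

lemma square_eq_odd_indicator_int: "\<bar>x :: int\<bar> \<le> 1 \<Longrightarrow> x^2 = (if odd x then 1 else 0)"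
proof -
  assume "\<bar>x\<bar> \<le> 1"
  then have "x = -1 \<or> x = 0 \<or> x = 1" by arith
  then show ?thesis by auto
qed

lemma sum_squares_le_one_iff:
  fixes x :: "'i \<Rightarrow> int"
  assumes fin: "finite I"
  shows "(\<Sum>i\<in>I. (x i)^2) \<le> 1 \<longleftrightarrow> (\<forall>i\<in>I. \<bar>x i\<bar> \<le> 1) \<and> card {i \<in> I. odd (x i)} \<le> 1"
proof -
  let ?O = "{i \<in> I. odd (x i)}"
  let ?S = "\<Sum>i\<in>I. (x i)^2"
  have "int (card ?O) = (\<Sum>i\<in>?O. 1)" by simp
  also have "\<dots> \<le> (\<Sum>i\<in>?O. (x i)^2)"
    by (intro sum_mono) (simp add: one_le_square_if_odd_int)
  also have "\<dots> \<le> ?S"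
    using fin by (intro sum_mono2) auto
  finally have odd_le: "int (card ?O) \<le> ?S" .
  have square_le: "(x i)^2 \<le> ?S" if "i \<in> I" for i
    by (rule member_le_sum[OF that _ fin]) simp
  have S_eq: "?S = int (card ?O)" if "\<forall>i\<in>I. \<bar>x i\<bar> \<le> 1"
  proof -
    have "?S = (\<Sum>i\<in>I. if odd (x i) then 1 else 0)"
      using that square_eq_odd_indicator_int by (intro sum.cong) auto
    also have "\<dots> = int (card ?O)"
      using fin by (simp add: sum.inter_filter[symmetric])
    finally show ?thesis .
  qed
  show ?thesis
  proof
    assume "?S \<le> 1"
    then show "(\<forall>i\<in>I. \<bar>x i\<bar> \<le> 1) \<and> card ?O \<le> 1"
      using odd_le square_le abs_square_le_1 by (meson order_trans of_nat_le_1_iff)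
  qed (use S_eq in simp)
qed

lemma excess_eq_half_iff_complete_bipartite:
  assumes G: "simple_graph V E"
    and parts: "\<And>C. C \<in> components V E \<Longrightarrow> complete_bipartite_parts E C (A C) (B C)"
  shows "excess V E = int (card V div 2) \<longleftrightarrow>
    (\<forall>C\<in>components V E. \<bar>int (card (A C)) - int (card (B C))\<bar> \<le> 1)
    \<and> card {C \<in> components V E. odd (card C)} \<le> 1"
proof -
  let ?d = "\<lambda>C. int (card (A C)) - int (card (B C))"
  have finite_comps: "finite (components V E)"
    using G unfolding simple_graph_def components_def by simp
  have "odd (card C) \<longleftrightarrow> odd (?d C)" if "C \<in> components V E" for C
  proof -
    have "A C \<inter> B C = {}" "A C \<union> B C = C" "finite C"
      using parts[OF that] finite_components[OF _ that] G
      unfolding complete_bipartite_parts_def simple_graph_def by auto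
    then have "card C = card (A C) + card (B C)" by (metis card_Un_disjoint finite_Un)
    then show ?thesis by presburger
  qed
  then have odd_eq: "{C \<in> components V E. odd (card C)} = {C \<in> components V E. odd (?d C)}"
    by blast
  have "0 \<le> (\<Sum>C\<in>components V E. (?d C)^2)" by (intro sum_nonneg) simp
  \<comment> \<open>n - \<Sigma> = 2 excess is even, so \<Sigma> \<le> 1 means \<Sigma> = n mod 2\<close>
  then have "excess V E = int (card V div 2) \<longleftrightarrow> (\<Sum>C\<in>components V E. (?d C)^2) \<le> 1"
    using double_excess_complete_bipartite[OF G parts] by presburger
  then show ?thesis unfolding odd_eq sum_squares_le_one_iff[OF finite_comps] .
qed

lemma complete_bipartite_parts_if_excess_eq_half:
  assumes G: "simple_graph V E" and extremal: "excess V E = int (card V div 2)"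
  obtains A B where "\<And>C. C \<in> components V E \<Longrightarrow> complete_bipartite_parts E C (A C) (B C)"
proof -
  have "\<exists>A B. complete_bipartite_parts E C A B" if "C \<in> components V E" for C
    using that component_complete_bipartite[OF G square_neighbours_subset_if_excess_eq_half[OF G extremal]]
    unfolding components_def by blast
  then show ?thesis using that by metis
qed

lemma balanced_complete_bipartite_iff:
  "balanced_complete_bipartite E C \<longleftrightarrow>
    (\<exists>A B. complete_bipartite_parts E C A B \<and> \<bar>int (card A) - int (card B)\<bar> \<le> 1)"
  unfolding balanced_complete_bipartite_def complete_bipartite_parts_def by blast

theorem mainTheorem14:
  fixes V :: "'a set" and E :: "'a set set"
  assumes "simple_graph V E"
  shows "int (card E) - int (card (square_edges V E)) \<le> int (card V div 2) \<and>
         (int (card E) - int (card (square_edges V E)) = int (card V div 2) \<longleftrightarrow>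
           (\<forall>C\<in>components V E. balanced_complete_bipartite E C) \<and>
           card {C \<in> components V E. odd (card C)} \<le> 1)"
proof -
  note G = assms
  have "excess V E = int (card V div 2) \<longleftrightarrow>
      (\<forall>C\<in>components V E. balanced_complete_bipartite E C) \<and>
      card {C \<in> components V E. odd (card C)} \<le> 1" (is "?extremal \<longleftrightarrow> ?balanced")
  proof
    assume extremal: ?extremal
    obtain A B where parts: "\<And>C. C \<in> components V E \<Longrightarrow> complete_bipartite_parts E C (A C) (B C)"
      using complete_bipartite_parts_if_excess_eq_half[OF G extremal] by blast
    show ?balanced
      using extremal excess_eq_half_iff_complete_bipartite[OF G parts] parts
      unfolding balanced_complete_bipartite_iff by blast
  next
    assume balanced: ?balanced
    then obtain A B where parts: "\<And>C. C \<in> components V E \<Longrightarrow> complete_bipartite_parts E C (A C) (B C)"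
      and "\<And>C. C \<in> components V E \<Longrightarrow> \<bar>int (card (A C)) - int (card (B C))\<bar> \<le> 1"
      unfolding balanced_complete_bipartite_iff by metis
    then show ?extremal
      using balanced excess_eq_half_iff_complete_bipartite[OF G parts] by blast
  qed
  then show ?thesis using excess_le_half[OF G] unfolding excess_def by simp
qed

end
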